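(* Let $W=\mathrm{diag}(w_1,w_2,\dots)$ with $w_n\ge0$ for all $n$ be a diagonal operator such that $-\Delta_1\ge W$ in the sense of quadratic forms, i.e. $\sum_{n=1}^\infty w_n|\psi_n|^2\le\sum_{n=1}^\infty|\psi_{n+1}-\psi_n|^2$ for all $\psi\in\ell^2(\mathbb{N})$. Then $W=0$.
   Context: $\mathbb{N}=\{1,2,\dots\}$. The discrete Neumann Laplacian is $-\Delta_1:=2-J_1$ on $\ell^2(\mathbb{N})$, where $(J_1\psi)_1=\psi_1+\psi_2$ and $(J_1\psi)_n=\psi_{n-1}+\psi_{n+1}$ for $n\ge2$; its quadratic form is $\langle\psi,-\Delta_1\psi\rangle=\sum_{n\ge1}|\psi_{n+1}-\psi_n|^2$. *)

theory Defs
  imports "HOL-Analysis.Analysis"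
begin

end

theory Submission
  imports Defs
begin

(* The form of the Neumann Laplacian admits test functions of arbitrarily small energy that
   equal 1 on any prescribed finite set: the tent that is 1 on [1, N] and falls linearly to 0
   on [N, 2N] has N increments of size 1/N, hence energy 1/N.  Testing the inequality with it
   gives w m <= 1/N for every N >= m, so w m = 0. *)

definition tent :: "nat \<Rightarrow> nat \<Rightarrow> real" where
  "tent N k = (if k \<le> N then 1 else if k \<le> 2*N then 2 - real k / real N else 0)"

lemma tent_eq_one: "k \<le> N \<Longrightarrow> tent N k = 1"
  by (simp add: tent_def)

lemma tent_eq_zero: "2*N < k \<Longrightarrow> tent N k = 0"
  by (auto simp: tent_def)

lemma tent_diff_sq:
  assumes "N \<ge> 1"
  shows "(tent N (Suc (Suc n)) - tent N (Suc n))\<^sup>2 =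
     (if n \<in> {N-1..<2*N-1} then 1 / (real N)\<^sup>2 else 0)"
proof -
  have N_pos: "real N > 0" using assms by simp
  consider "Suc (Suc n) \<le> N" | "N \<le> Suc n \<and> Suc (Suc n) \<le> 2*N" | "2*N \<le> Suc n"
    by linarith
  then show ?thesis
  proof cases
    case 1
    then show ?thesis by (auto simp: tent_def)
  next
    case 2
    have "tent N (Suc n) = 2 - real (Suc n) / real N"
      using 2 N_pos by (cases "Suc n = N") (auto simp: tent_def)
    moreover have "tent N (Suc (Suc n)) = 2 - real (Suc (Suc n)) / real N"
      using 2 by (simp add: tent_def)
    ultimately have "tent N (Suc (Suc n)) - tent N (Suc n) = - 1 / real N"
      using N_pos by (simp add: field_simps)
    moreover have "n \<in> {N-1..<2*N-1}" using 2 by auto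
    ultimately show ?thesis by (simp add: power2_eq_square)
  next
    case 3
    then show ?thesis by (auto simp: tent_def)
  qed
qed

lemma sums_tent_diff_sq:
  assumes "N \<ge> 1"
  shows "(\<lambda>n. (tent N (Suc (Suc n)) - tent N (Suc n))\<^sup>2) sums (1 / real N)"
proof -
  have "(\<lambda>n. if n \<in> {N-1..<2*N-1} then 1 / (real N)\<^sup>2 else 0) sums
        (\<Sum>n\<in>{N-1..<2*N-1}. 1 / (real N)\<^sup>2)"
    by (rule sums_If_finite_set) simp
  moreover have "(\<Sum>n\<in>{N-1..<2*N-1}. 1 / (real N)\<^sup>2) = 1 / real N"
    using assms by (simp add: power2_eq_square)
  ultimately show ?thesis
    by (simp add: tent_diff_sq[OF assms])
qed

lemma summable_tent_sq: "summable (\<lambda>n. (tent N (Suc n))\<^sup>2)"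
proof (rule summable_finite)
  show "finite {..<2*N}" by simp
qed (simp add: tent_eq_zero)

lemma hardy_weight_le_inverse:
  fixes w :: "nat \<Rightarrow> real"
  assumes hardy: "\<forall>\<psi> :: nat \<Rightarrow> complex.
        summable (\<lambda>n. (cmod (\<psi> (Suc n)))\<^sup>2) \<longrightarrow>
        (\<Sum>n. ennreal (w (Suc n) * (cmod (\<psi> (Suc n)))\<^sup>2))
          \<le> (\<Sum>n. ennreal ((cmod (\<psi> (Suc (Suc n)) - \<psi> (Suc n)))\<^sup>2))"
    and "1 \<le> m" "m \<le> N"
  shows "w m \<le> 1 / real N"
proof -
  define \<psi> where "\<psi> k = complex_of_real (tent N k)" for k
  have norm_\<psi>: "cmod (\<psi> k) = \<bar>tent N k\<bar>" for k
    by (simp add: \<psi>_def)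
  have norm_diff_\<psi>: "cmod (\<psi> (Suc k) - \<psi> k) = \<bar>tent N (Suc k) - tent N k\<bar>" for k
    by (metis \<psi>_def norm_of_real of_real_diff)
  have "ennreal (w m) = ennreal (w (Suc (m-1)) * (cmod (\<psi> (Suc (m-1))))\<^sup>2)"
    using assms(2,3) by (simp add: norm_\<psi> tent_eq_one)
  also have "\<dots> \<le> (\<Sum>n. ennreal (w (Suc n) * (cmod (\<psi> (Suc n)))\<^sup>2))"
    using sum_le_suminf[of "\<lambda>n. ennreal (w (Suc n) * (cmod (\<psi> (Suc n)))\<^sup>2)" "{m-1}"]
    by simp
  also have "\<dots> \<le> (\<Sum>n. ennreal ((cmod (\<psi> (Suc (Suc n)) - \<psi> (Suc n)))\<^sup>2))"
  proof -
    have "summable (\<lambda>n. (cmod (\<psi> (Suc n)))\<^sup>2)"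
      using summable_tent_sq[of N] by (simp add: norm_\<psi>)
    then show ?thesis using hardy by blast
  qed
  also have "\<dots> = ennreal (1 / real N)"
    using sums_tent_diff_sq[of N] assms(2,3)
    by (intro suminf_ennreal_eq) (simp_all add: norm_diff_\<psi>)
  finally show ?thesis
    by (simp add: ennreal_le_iff)
qed

theorem theorem4p2:
  fixes w :: "nat \<Rightarrow> real"
  assumes nonneg: "\<forall>n\<ge>1. w n \<ge> 0"
    and hardy: "\<forall>\<psi> :: nat \<Rightarrow> complex.
        summable (\<lambda>n. (cmod (\<psi> (Suc n)))\<^sup>2) \<longrightarrow>
        (\<Sum>n. ennreal (w (Suc n) * (cmod (\<psi> (Suc n)))\<^sup>2))
          \<le> (\<Sum>n. ennreal ((cmod (\<psi> (Suc (Suc n)) - \<psi> (Suc n)))\<^sup>2))"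
  shows "\<forall>n\<ge>1. w n = 0"
proof (intro allI impI)
  fix m :: nat
  assume "m \<ge> 1"
  have "w m \<le> 0"
  proof (rule LIMSEQ_le_const[OF lim_1_over_n])
    show "\<exists>N. \<forall>n\<ge>N. w m \<le> 1 / real n"
      using hardy_weight_le_inverse[OF hardy \<open>m \<ge> 1\<close>] by blast
  qed
  with nonneg \<open>m \<ge> 1\<close> show "w m = 0"
    by (simp add: order_antisym)
qed

end
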